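(* Let $n\ge2$ and let $P(x)=a_0+a_1x+\dots+a_nx^n\in\mathbb{Z}[x]$ with $a_n\neq0$ and $\max_i|a_i|=|a_n|$. Let $Q>1$ and suppose there exist $w,\kappa,\eta\in\mathbb{R}$ with $w>0$, $-\frac w2<\eta<\frac w2$, and an interval $J$ with $|J|\gg Q^{-\frac w2-\eta}$ such that $r(P)=Q^{-\kappa}$ and $|P(x)|<|a_n|Q^{-w}$ for all $x\in J$. Then the discriminant of $P$ satisfies $$|D(P)|\ll |a_n|^{2n-2}\,Q^{-w-(n-1)(n-2)\kappa+2\eta}.$$
   Context: $r(P)$ denotes the largest distance between two (complex) roots of $P$; $D(P)$ is the discriminant of $P$. The notation $A\ll B$ means $A\le cB$ for a constant $c>0$ depending only on $n$ and on the implied constant in the hypothesis $|J|\gg Q^{-w/2-\eta}$ (not on $P$, $Q$, $w$, $\kappa$, $\eta$). *)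

theory Defs
  imports "HOL-Analysis.Analysis" "HOL-Computational_Algebra.Computational_Algebra"
begin

definition croots :: "int poly \<Rightarrow> complex multiset" where
  "croots p = proots (map_poly of_int p)"

definition root_dist :: "int poly \<Rightarrow> real" where
  "root_dist p = Max {cmod (x - y) | x y. x \<in># croots p \<and> y \<in># croots p}"

text \<open>Discriminant D(P) = a_n^(2n-2) * prod_{i<j} (alpha_i - alpha_j)^2
  = (-1)^(n(n-1)/2) a_n^(2n-2) prod_{i \<noteq> j} (alpha_i - alpha_j),
  roots counted with multiplicity.\<close>
definition discriminant :: "int poly \<Rightarrow> complex" where
  "discriminant p =
     (let R = croots p; n = degree p in
      (-1) ^ (n * (n - 1) div 2) * of_int (lead_coeff p) ^ (2 * n - 2) *
      (\<Prod>x\<in>#R. \<Prod>y\<in>#(R - {#x#}). x - y))"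

end

theory Submission
  imports Defs
begin

(* Among n + 1 equally spaced points of J one, x, has distance at least |J| / (2 (n + 1)) from
   the real parts of all n roots. If \<alpha> is the root nearest to x, then |\<alpha> - \<alpha>_j| \<le> 2 |x - \<alpha>_j|
   for every root, so |a_n| \<Prod>_{j \<noteq> i} |\<alpha> - \<alpha>_j| |J| / (2 (n + 1)) \<le> 2^(n-1) |P(x)| < 2^(n-1) |a_n| Q^(-w).
   In |D(P)| = |a_n|^(2n-2) \<Prod>_{i \<noteq> j} |\<alpha>_i - \<alpha>_j| the factors involving \<alpha> give the square of
   that product, and each of the remaining (n - 1)(n - 2) factors is at most r(P). *)

lemma prod_mset_nonneg:
  fixes f :: "'a \<Rightarrow> 'b::linordered_semidom"
  assumes "\<And>x. x \<in># M \<Longrightarrow> 0 \<le> f x"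
  shows "0 \<le> (\<Prod>x\<in>#M. f x)"
  using assms by (induction M) auto

lemma prod_mset_mono:
  fixes f g :: "'a \<Rightarrow> 'b::linordered_semidom"
  assumes "\<And>x. x \<in># M \<Longrightarrow> 0 \<le> f x \<and> f x \<le> g x"
  shows "(\<Prod>x\<in>#M. f x) \<le> (\<Prod>x\<in>#M. g x)"
  using assms
proof (induction M)
  case (add a M)
  then have "0 \<le> (\<Prod>x\<in>#M. f x)" "0 \<le> f a" "f a \<le> g a" "0 \<le> g a"
    by (auto intro!: prod_mset_nonneg dest: order_trans)
  with add show ?case by (simp add: mult_mono)
qed simp

lemma norm_prod_mset:
  fixes f :: "'a \<Rightarrow> 'b::real_normed_field"
  shows "norm (\<Prod>x\<in>#M. f x) = (\<Prod>x\<in>#M. norm (f x))"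
  by (induction M) (simp_all add: norm_mult)

lemma card_set_mset_le_size: "card (set_mset M) \<le> size M"
  by (induction M) (auto simp: card_insert_if)

lemma exists_grid_point_far_from_finite_set:
  fixes S :: "real set" and a \<delta> :: real
  assumes "finite S" "card S \<le> n" "\<delta> > 0"
  shows "\<exists>k\<le>n. \<forall>t\<in>S. \<delta> \<le> \<bar>a + (2 * real k + 1) * \<delta> - t\<bar>"
proof -
  \<comment> \<open>t is within \<delta> of the k-th grid point only if t lies in the k-th cell of length 2\<delta>\<close>
  define cell where "cell t = nat \<lfloor>(t - a) / (2 * \<delta>)\<rfloor>" for t
  have in_cell: "k = cell t" if "\<bar>a + (2 * real k + 1) * \<delta> - t\<bar> < \<delta>" for k t
  proof -
    have "real k \<le> (t - a) / (2 * \<delta>)" "(t - a) / (2 * \<delta>) < real k + 1"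
      using that assms(3) by (simp_all add: abs_less_iff field_simps)
    then have "\<lfloor>(t - a) / (2 * \<delta>)\<rfloor> = int k"
      by (simp add: floor_eq_iff)
    then show ?thesis
      unfolding cell_def by simp
  qed
  have "card (cell ` S) < card {0..n}"
    using card_image_le[OF assms(1), of cell] assms(2) by simp
  then have "\<not> {0..n} \<subseteq> cell ` S"
    using card_mono[OF finite_imageI[OF assms(1)]] by (meson not_le)
  then obtain k where "k \<in> {0..n}" "k \<notin> cell ` S"
    by blast
  then show ?thesis
    using in_cell by (metis atLeastAtMost_iff image_eqI not_le)
qed

lemma exists_point_in_interval_far_from_multiset:
  fixes R :: "complex multiset" and a b :: real
  assumes "a < b"
  shows "\<exists>x\<in>{a<..<b}. \<forall>y\<in>#R. (b - a) / (2 * (real (size R) + 1)) \<le> dist (complex_of_real x) y"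
proof -
  define \<delta> where "\<delta> = (b - a) / (2 * (real (size R) + 1))"
  have "\<delta> > 0"
    using assms by (simp add: \<delta>_def)
  moreover have "card (Re ` set_mset R) \<le> size R"
    using card_image_le[of "set_mset R" Re] card_set_mset_le_size[of R] by simp
  ultimately obtain k where k: "k \<le> size R" and far: "\<forall>t\<in>Re ` set_mset R. \<delta> \<le> \<bar>a + (2 * real k + 1) * \<delta> - t\<bar>"
    using exists_grid_point_far_from_finite_set by blast
  define x where "x = a + (2 * real k + 1) * \<delta>"
  have "(2 * real k + 1) * \<delta> \<le> (2 * real (size R) + 1) * \<delta>"
    using k \<open>\<delta> > 0\<close> by (intro mult_right_mono) auto
  also have "\<dots> < b - a"
    using assms by (simp add: \<delta>_def field_simps)
  finally have "(2 * real k + 1) * \<delta> < b - a" .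
  with \<open>\<delta> > 0\<close> have "x \<in> {a<..<b}"
    by (simp add: x_def)
  moreover have "\<delta> \<le> dist (complex_of_real x) y" if "y \<in># R" for y
  proof -
    have "\<delta> \<le> \<bar>Re (complex_of_real x - y)\<bar>"
      using far that by (simp add: x_def)
    also have "\<dots> \<le> dist (complex_of_real x) y"
      using abs_Re_le_cmod[of "complex_of_real x - y"] by (simp add: dist_norm)
    finally show ?thesis .
  qed
  ultimately show ?thesis
    unfolding \<delta>_def by blast
qed

lemma exists_prod_dist_le_of_nearest:
  fixes R :: "'a::metric_space multiset" and x :: 'a
  assumes "R \<noteq> {#}"
  shows "\<exists>\<alpha>\<in>#R. (\<Prod>y\<in>#R - {#\<alpha>#}. dist \<alpha> y) * dist x \<alpha> \<le> 2 ^ (size R - 1) * (\<Prod>y\<in>#R. dist x y)"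
proof -
  define d where "d = Min (dist x ` set_mset R)"
  have "d \<in> dist x ` set_mset R"
    using assms by (simp add: d_def)
  then obtain \<alpha> where \<alpha>: "\<alpha> \<in># R" "dist x \<alpha> = d"
    by auto
  have nearest: "dist x \<alpha> \<le> dist x y" if "y \<in># R" for y
    using that by (simp add: \<alpha>(2) d_def)
  define R' where "R' = R - {#\<alpha>#}"
  have R: "R = add_mset \<alpha> R'"
    using \<alpha>(1) by (simp add: R'_def)
  have "(\<Prod>y\<in>#R'. dist \<alpha> y) \<le> (\<Prod>y\<in>#R'. 2 * dist x y)"
  proof (rule prod_mset_mono)
    fix y
    assume "y \<in># R'"
    then have "dist x \<alpha> \<le> dist x y"
      by (simp add: R nearest)
    then show "0 \<le> dist \<alpha> y \<and> dist \<alpha> y \<le> 2 * dist x y"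
      using dist_triangle[of \<alpha> y x] by (simp add: dist_commute)
  qed
  also have "\<dots> = 2 ^ size R' * (\<Prod>y\<in>#R'. dist x y)"
    by (simp add: prod_mset.distrib)
  finally have "(\<Prod>y\<in>#R'. dist \<alpha> y) * dist x \<alpha> \<le> 2 ^ size R' * (\<Prod>y\<in>#R'. dist x y) * dist x \<alpha>"
    by (simp add: mult_right_mono)
  also have "\<dots> = 2 ^ (size R - 1) * (\<Prod>y\<in>#R. dist x y)"
    by (simp add: R mult_ac)
  finally show ?thesis
    using \<alpha>(1) unfolding R'_def by blast
qed

lemma prod_pairwise_dist_le:
  fixes R :: "'a::metric_space multiset"
  assumes "\<alpha> \<in># R" and diam: "\<And>x y. x \<in># R \<Longrightarrow> y \<in># R \<Longrightarrow> dist x y \<le> r"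
  shows "(\<Prod>x\<in>#R. \<Prod>y\<in>#R - {#x#}. dist x y) \<le>
    (\<Prod>y\<in>#R - {#\<alpha>#}. dist \<alpha> y) ^ 2 * r ^ ((size R - 1) * (size R - 2))"
proof -
  \<comment> \<open>the factors with x = \<alpha> or y = \<alpha> give F squared, each of the others is at most r\<close>
  define R' where "R' = R - {#\<alpha>#}"
  define F where "F = (\<Prod>y\<in>#R'. dist \<alpha> y)"
  have R: "R = add_mset \<alpha> R'"
    using assms(1) by (simp add: R'_def)
  have "(\<Prod>x\<in>#R'. \<Prod>y\<in>#R - {#x#}. dist x y) =
      (\<Prod>x\<in>#R'. dist x \<alpha> * (\<Prod>y\<in>#R' - {#x#}. dist x y))"
    unfolding R by (intro arg_cong[where f = prod_mset] image_mset_cong) (simp add: diff_union_swap2)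
  then have "(\<Prod>x\<in>#R. \<Prod>y\<in>#R - {#x#}. dist x y) =
      F * (\<Prod>x\<in>#R'. dist x \<alpha> * (\<Prod>y\<in>#R' - {#x#}. dist x y))"
    by (simp add: R F_def)
  also have "\<dots> \<le> F * (\<Prod>x\<in>#R'. dist \<alpha> x * r ^ (size R' - 1))"
  proof (intro mult_left_mono prod_mset_mono conjI)
    fix x
    assume x: "x \<in># R'"
    have "(\<Prod>y\<in>#R' - {#x#}. dist x y) \<le> (\<Prod>y\<in>#R' - {#x#}. r)"
      using x by (intro prod_mset_mono) (auto simp: R'_def intro!: diam dest!: in_diffD)
    then show "dist x \<alpha> * (\<Prod>y\<in>#R' - {#x#}. dist x y) \<le> dist \<alpha> x * r ^ (size R' - 1)"
      using x by (simp add: size_Diff_singleton dist_commute mult_left_mono)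
  qed (auto intro!: mult_nonneg_nonneg prod_mset_nonneg simp: F_def)
  also have "\<dots> = F ^ 2 * r ^ ((size R - 1) * (size R - 2))"
    by (simp add: R F_def prod_mset.distrib power2_eq_square mult.commute flip: power_mult)
  finally show ?thesis
    by (simp add: F_def R'_def)
qed

lemma size_croots [simp]: "size (croots P) = degree P"
  by (simp add: croots_def size_proots_complex degree_map_poly)

lemma abs_poly_of_int_poly:
  fixes P :: "int poly" and x :: real
  shows "\<bar>poly (map_poly real_of_int P) x\<bar> =
    \<bar>real_of_int (lead_coeff P)\<bar> * (\<Prod>y\<in>#croots P. dist (complex_of_real x) y)"
proof -
  define p :: "complex poly" where "p = map_poly of_int P"
  have "complex_of_real (poly (map_poly real_of_int P) x) = poly p (of_real x)"
    by (simp add: p_def poly_altdef degree_map_poly coeff_map_poly)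
  also have "\<dots> = poly (smult (lead_coeff p) (\<Prod>y\<in>#proots p. [:-y, 1:])) (of_real x)"
    using complex_poly_decompose_multiset[of p] by simp
  also have "\<dots> = of_int (lead_coeff P) * (\<Prod>y\<in>#croots P. of_real x - y)"
    by (cases "P = 0") (simp_all add: p_def croots_def lead_coeff_map_poly_nz poly_prod_mset)
  finally have "cmod (complex_of_real (poly (map_poly real_of_int P) x)) =
      cmod (of_int (lead_coeff P) * (\<Prod>y\<in>#croots P. of_real x - y))"
    by simp
  then show ?thesis
    by (simp add: norm_mult norm_prod_mset dist_norm)
qed

lemma norm_discriminant:
  "cmod (discriminant P) =
    \<bar>real_of_int (lead_coeff P)\<bar> ^ (2 * degree P - 2) * (\<Prod>x\<in>#croots P. \<Prod>y\<in>#croots P - {#x#}. dist x y)"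
  by (simp add: discriminant_def Let_def norm_mult norm_power norm_prod_mset dist_norm)

lemma dist_croots_le_root_dist:
  assumes "x \<in># croots P" "y \<in># croots P"
  shows "dist x y \<le> root_dist P"
proof -
  have "{cmod (x - y) |x y. x \<in># croots P \<and> y \<in># croots P} =
      (\<lambda>(x, y). cmod (x - y)) ` (set_mset (croots P) \<times> set_mset (croots P))"
    by auto
  then show ?thesis
    unfolding root_dist_def using assms by (auto simp: dist_norm intro!: Max_ge)
qed

(* The product over the other roots is |P'(\<alpha>) / a_n|. *)
lemma exists_root_prod_dist_le_of_small_on_interval:
  fixes P :: "int poly" and a b \<epsilon> :: real
  assumes "degree P = n" "n \<ge> 1" "a < b"
    and small: "\<forall>x\<in>{a<..<b}. \<bar>poly (map_poly real_of_int P) x\<bar> < \<bar>real_of_int (lead_coeff P)\<bar> * \<epsilon>"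
  shows "\<exists>\<alpha>\<in>#croots P. (\<Prod>y\<in>#croots P - {#\<alpha>#}. dist \<alpha> y) * (b - a) \<le> 2 ^ n * (real n + 1) * \<epsilon>"
proof -
  define R where "R = croots P"
  define \<delta> where "\<delta> = (b - a) / (2 * (real n + 1))"
  have "size R = n"
    using assms(1) by (simp add: R_def)
  with assms(2) have "R \<noteq> {#}"
    by auto
  obtain x where x: "x \<in> {a<..<b}" and far: "\<forall>y\<in>#R. \<delta> \<le> dist (complex_of_real x) y"
    using exists_point_in_interval_far_from_multiset[OF assms(3), of R] by (auto simp: \<delta>_def \<open>size R = n\<close>)
  obtain \<alpha> where \<alpha>: "\<alpha> \<in># R" and near: "(\<Prod>y\<in>#R - {#\<alpha>#}. dist \<alpha> y) * dist (complex_of_real x) \<alpha>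
      \<le> 2 ^ (n - 1) * (\<Prod>y\<in>#R. dist (complex_of_real x) y)"
    using exists_prod_dist_le_of_nearest[OF \<open>R \<noteq> {#}\<close>] by (auto simp: \<open>size R = n\<close>)
  define F where "F = (\<Prod>y\<in>#R - {#\<alpha>#}. dist \<alpha> y)"
  have "F \<ge> 0"
    unfolding F_def by (rule prod_mset_nonneg) simp
  have "lead_coeff P \<noteq> 0"
    using assms(1,2) by auto
  then have prod_lt: "(\<Prod>y\<in>#R. dist (complex_of_real x) y) < \<epsilon>"
    using small x by (simp add: abs_poly_of_int_poly R_def)
  have "F * (b - a) = 2 * (real n + 1) * (F * \<delta>)"
    by (simp add: \<delta>_def)
  also have "\<dots> \<le> 2 * (real n + 1) * (F * dist (complex_of_real x) \<alpha>)"
    using far \<alpha> \<open>F \<ge> 0\<close> by (intro mult_left_mono) auto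
  also have "\<dots> \<le> 2 * (real n + 1) * (2 ^ (n - 1) * (\<Prod>y\<in>#R. dist (complex_of_real x) y))"
    using near by (intro mult_left_mono) (auto simp: F_def)
  also have "\<dots> \<le> 2 * (real n + 1) * (2 ^ (n - 1) * \<epsilon>)"
    using prod_lt by (intro mult_left_mono) auto
  also have "\<dots> = 2 ^ n * (real n + 1) * \<epsilon>"
    using assms(2) by (cases n) auto
  finally show ?thesis
    using \<alpha> by (auto simp: F_def R_def)
qed

lemma norm_discriminant_le:
  assumes "\<alpha> \<in># croots P"
  shows "cmod (discriminant P) \<le> \<bar>real_of_int (lead_coeff P)\<bar> ^ (2 * degree P - 2) *
    (\<Prod>y\<in>#croots P - {#\<alpha>#}. dist \<alpha> y) ^ 2 * root_dist P ^ ((degree P - 1) * (degree P - 2))"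
  using prod_pairwise_dist_le[OF assms dist_croots_le_root_dist]
  by (simp add: norm_discriminant mult_left_mono mult.assoc)

lemma norm_discriminant_mult_sq_le_of_small_on_interval:
  fixes P :: "int poly" and a b \<epsilon> :: real
  assumes "degree P = n" "n \<ge> 1" "a < b"
    and small: "\<forall>x\<in>{a<..<b}. \<bar>poly (map_poly real_of_int P) x\<bar> < \<bar>real_of_int (lead_coeff P)\<bar> * \<epsilon>"
  shows "cmod (discriminant P) * (b - a) ^ 2 \<le>
    (2 ^ n * (real n + 1) * \<epsilon>) ^ 2 * \<bar>real_of_int (lead_coeff P)\<bar> ^ (2 * n - 2) *
      root_dist P ^ ((n - 1) * (n - 2))"
proof -
  obtain \<alpha> where \<alpha>: "\<alpha> \<in># croots P"
    and sep: "(\<Prod>y\<in>#croots P - {#\<alpha>#}. dist \<alpha> y) * (b - a) \<le> 2 ^ n * (real n + 1) * \<epsilon>"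
    using exists_root_prod_dist_le_of_small_on_interval[OF assms] by blast
  define F where "F = (\<Prod>y\<in>#croots P - {#\<alpha>#}. dist \<alpha> y)"
  define M where "M = \<bar>real_of_int (lead_coeff P)\<bar> ^ (2 * n - 2) * root_dist P ^ ((n - 1) * (n - 2))"
  have "0 \<le> root_dist P"
    using dist_croots_le_root_dist[OF \<alpha> \<alpha>] by simp
  then have "M \<ge> 0"
    by (simp add: M_def)
  have "F \<ge> 0"
    unfolding F_def by (rule prod_mset_nonneg) simp
  have "cmod (discriminant P) * (b - a) ^ 2 \<le> F ^ 2 * M * (b - a) ^ 2"
    using norm_discriminant_le[OF \<alpha>] by (intro mult_right_mono) (simp_all add: assms(1) F_def M_def mult_ac)
  also have "\<dots> = (F * (b - a)) ^ 2 * M"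
    by (simp add: power_mult_distrib)
  also have "\<dots> \<le> (2 ^ n * (real n + 1) * \<epsilon>) ^ 2 * M"
    using sep \<open>F \<ge> 0\<close> \<open>M \<ge> 0\<close> assms(3) by (intro mult_right_mono power_mono) (simp_all add: F_def)
  finally show ?thesis
    by (simp add: M_def mult.assoc)
qed

theorem lemma4:
  fixes n :: nat and c :: real
  assumes "n \<ge> 2" and "c > 0"
  shows "\<exists>C>0. \<forall>(P::int poly) (Q::real) (w::real) (\<kappa>::real) (\<eta>::real) (a::real) (b::real).
      degree P = n \<longrightarrow>
      (\<forall>i. \<bar>coeff P i\<bar> \<le> \<bar>lead_coeff P\<bar>) \<longrightarrow>
      Q > 1 \<longrightarrow> w > 0 \<longrightarrow> - (w / 2) < \<eta> \<longrightarrow> \<eta> < w / 2 \<longrightarrow>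
      a < b \<longrightarrow> b - a \<ge> c * Q powr (- (w / 2) - \<eta>) \<longrightarrow>
      root_dist P = Q powr (- \<kappa>) \<longrightarrow>
      (\<forall>x\<in>{a<..<b}. \<bar>poly (map_poly real_of_int P) x\<bar> < \<bar>real_of_int (lead_coeff P)\<bar> * Q powr (- w)) \<longrightarrow>
      cmod (discriminant P) \<le>
        C * \<bar>real_of_int (lead_coeff P)\<bar> ^ (2 * n - 2) *
          Q powr (- w - real ((n - 1) * (n - 2)) * \<kappa> + 2 * \<eta>)"
proof -
  define K :: real where "K = 2 ^ n * (real n + 1)"
  show ?thesis
  proof (intro exI[of _ "(K / c) ^ 2"] conjI allI impI)
    show "(K / c) ^ 2 > 0"
      using assms(2) by (simp add: K_def)
    fix P :: "int poly" and Q w \<kappa> \<eta> a b :: real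
    assume deg: "degree P = n" and "Q > 1" and "a < b"
      and long: "c * Q powr (- (w / 2) - \<eta>) \<le> b - a" and r: "root_dist P = Q powr (- \<kappa>)"
      and small: "\<forall>x\<in>{a<..<b}. \<bar>poly (map_poly real_of_int P) x\<bar> < \<bar>real_of_int (lead_coeff P)\<bar> * Q powr (- w)"
    let ?m = "(n - 1) * (n - 2)" and ?A = "\<bar>real_of_int (lead_coeff P)\<bar> ^ (2 * n - 2)"
    have "cmod (discriminant P) * (b - a) ^ 2 \<le> (K * Q powr (- w)) ^ 2 * ?A * Q powr (- real ?m * \<kappa>)"
      using norm_discriminant_mult_sq_le_of_small_on_interval[OF deg _ \<open>a < b\<close> small] assms(1) r \<open>Q > 1\<close>
      by (simp add: K_def powr_power)
    moreover have "(c * Q powr (- (w / 2) - \<eta>)) ^ 2 \<le> (b - a) ^ 2"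
      using long assms(2) by (intro power_mono) auto
    ultimately have "cmod (discriminant P) * (c * Q powr (- (w / 2) - \<eta>)) ^ 2 \<le>
        (K * Q powr (- w)) ^ 2 * ?A * Q powr (- real ?m * \<kappa>)"
      by (meson mult_left_mono norm_ge_zero order_trans)
    also have "\<dots> = (K / c) ^ 2 * ?A * Q powr (- w - real ?m * \<kappa> + 2 * \<eta>) * (c * Q powr (- (w / 2) - \<eta>)) ^ 2"
      using assms(2) \<open>Q > 1\<close> by (simp add: power_mult_distrib power_divide powr_power algebra_simps flip: powr_add)
    finally show "cmod (discriminant P) \<le> (K / c) ^ 2 * ?A * Q powr (- w - real ?m * \<kappa> + 2 * \<eta>)"
      using assms(2) \<open>Q > 1\<close> by simp
  qed
qed

end
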